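(* Let $\mathcal A$ be a category of cubes. There is an isomorphism $\mathrm{sh}_\mathcal{A}\mathcal{L}_\mathcal{A}(!\{\tau\})\cong\mathbf{1}$, where $\mathbf 1$ is the terminal $\mathcal A$-set. Therefore, when $\Sigma=\{\tau\}$, the category of labelled $\mathcal{A}$-sets is equivalent to the category of unlabelled $\mathcal{A}$-sets.
   Context: $[0]=\{()\}$, $[n]=\{0,1\}^n$ ($n\ge1$) with the product order; ${\rm PoSet}$: posets with strictly increasing maps. Face maps $\delta_i^\alpha:[n-1]\to[n]$ insert $\alpha$ at position $i$; $\square$ is the subcategory of ${\rm PoSet}$ with objects $[n]$ generated by face maps; its presheaves are precubical sets. A map is adjacency-preserving if strictly increasing and it sends pairs at Hamming distance $1$ to pairs at Hamming distance $1$. A category of cubes is a subcategory $\mathcal A\subset{\rm PoSet}$ with objects $\{[n]:n\ge0\}$, containing $\square$, with all morphisms adjacency-preserving. $\mathcal A$-sets are presheaves on $\mathcal A$; $\mathcal A[p]=\mathcal A(-,[p])$, $\partial\mathcal A[p]$ its subpresheaf of cubes of dimension $<p$. $\mathcal L_\mathcal A$ is the left adjoint of restriction along $\square\subset\mathcal A$. For a set $\Sigma$, $!\Sigma$ is the precubical set with $(!\Sigma)_0=\{()\}$, $(!\Sigma)_n=\Sigma^n$, $\partial_i^0=\partial_i^1$ deleting the $i$-th letter. $\mathrm{sh}_\mathcal A$ is left adjoint to the inclusion of the full subcategory of $\mathcal A$-sets orthogonal to the maps $\mathcal A[p]\sqcup_{\partial\mathcal A[p]}\mathcal A[p]\to\mathcal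 A[p]$, $p\ge2$. A labelled $\mathcal A$-set (over $\Sigma$) is an object of the slice category of $\mathcal A$-sets over $\mathrm{sh}_\mathcal A\mathcal L_\mathcal A(!\Sigma)$. *)

theory Defs
  imports "HOL-Library.FuncSet"
begin

text \<open>The cube [n] = {0,1}^n, elements encoded as boolean lists of length n
  (False = 0, True = 1), with the product order.\<close>
definition cube :: "nat \<Rightarrow> bool list set" where
  "cube n = {xs. length xs = n}"

definition cleq :: "bool list \<Rightarrow> bool list \<Rightarrow> bool" where
  "cleq xs ys \<longleftrightarrow> list_all2 (\<le>) xs ys"

definition cless :: "bool list \<Rightarrow> bool list \<Rightarrow> bool" where
  "cless xs ys \<longleftrightarrow> cleq xs ys \<and> xs \<noteq> ys"

definition hamming1 :: "bool list \<Rightarrow> bool list \<Rightarrow> bool" where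
  "hamming1 xs ys \<longleftrightarrow> length xs = length ys \<and>
     card {i. i < length xs \<and> xs ! i \<noteq> ys ! i} = 1"

text \<open>A map [n] -> [m]: triple (n, m, f), f extensional on [n].\<close>
type_synonym cmor = "nat \<times> nat \<times> (bool list \<Rightarrow> bool list)"

definition mdom :: "cmor \<Rightarrow> nat" where "mdom f = fst f"
definition mcod :: "cmor \<Rightarrow> nat" where "mcod f = fst (snd f)"
definition mfun :: "cmor \<Rightarrow> bool list \<Rightarrow> bool list" where "mfun f = snd (snd f)"

text \<open>Morphisms of PoSet between cubes: strictly increasing maps.\<close>
definition strict_mor :: "cmor \<Rightarrow> bool" where
  "strict_mor f \<longleftrightarrow> mfun f \<in> cube (mdom f) \<rightarrow>\<^sub>E cube (mcod f) \<and>
     (\<forall>x\<in>cube (mdom f). \<forall>y\<in>cube (mdom f). cless x y \<longrightarrow> cless (mfun f x) (mfun f y))"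

definition adj_pres :: "cmor \<Rightarrow> bool" where
  "adj_pres f \<longleftrightarrow> strict_mor f \<and>
     (\<forall>x\<in>cube (mdom f). \<forall>y\<in>cube (mdom f). hamming1 x y \<longrightarrow> hamming1 (mfun f x) (mfun f y))"

definition idm :: "nat \<Rightarrow> cmor" where
  "idm n = (n, n, restrict id (cube n))"

definition comp :: "cmor \<Rightarrow> cmor \<Rightarrow> cmor" where
  "comp g f = (mdom f, mcod g, restrict (mfun g \<circ> mfun f) (cube (mdom f)))"

text \<open>Face map delta_i^alpha : [n-1] -> [n], inserting alpha at position i (1 <= i <= n).\<close>
definition face :: "nat \<Rightarrow> nat \<Rightarrow> bool \<Rightarrow> cmor" where
  "face n i \<alpha> = (n - 1, n, restrict (\<lambda>xs. take (i - 1) xs @ \<alpha> # drop (i - 1) xs) (cube (n - 1)))"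

text \<open>A category of cubes, given by its set of morphisms: a subcategory of PoSet with
  objects all [n], containing all face maps (hence the box category), all of whose
  morphisms are adjacency-preserving.\<close>
definition cube_category :: "cmor set \<Rightarrow> bool" where
  "cube_category A \<longleftrightarrow>
     (\<forall>f\<in>A. strict_mor f \<and> adj_pres f) \<and>
     (\<forall>n. idm n \<in> A) \<and>
     (\<forall>f\<in>A. \<forall>g\<in>A. mcod f = mdom g \<longrightarrow> comp g f \<in> A) \<and>
     (\<forall>n i \<alpha>. 1 \<le> i \<and> i \<le> n \<longrightarrow> face n i \<alpha> \<in> A)"

text \<open>A-sets (presheaves on A): carriers X n and contravariant action act f : X (mcod f) -> X (mdom f).\<close>
definition aset :: "cmor set \<Rightarrow> (nat \<Rightarrow> 'x set) \<Rightarrow> (cmor \<Rightarrow> 'x \<Rightarrow> 'x) \<Rightarrow> bool" where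
  "aset A X act \<longleftrightarrow>
     (\<forall>f\<in>A. \<forall>x\<in>X (mcod f). act f x \<in> X (mdom f)) \<and>
     (\<forall>n. \<forall>x\<in>X n. act (idm n) x = x) \<and>
     (\<forall>f\<in>A. \<forall>g\<in>A. mcod f = mdom g \<longrightarrow>
        (\<forall>x\<in>X (mcod g). act (comp g f) x = act f (act g x)))"

definition aset_map :: "cmor set \<Rightarrow> (nat \<Rightarrow> 'x set) \<Rightarrow> (cmor \<Rightarrow> 'x \<Rightarrow> 'x)
     \<Rightarrow> (nat \<Rightarrow> 'y set) \<Rightarrow> (cmor \<Rightarrow> 'y \<Rightarrow> 'y) \<Rightarrow> (nat \<Rightarrow> 'x \<Rightarrow> 'y) \<Rightarrow> bool" where
  "aset_map A X act Y act' h \<longleftrightarrow>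
     (\<forall>n. \<forall>x\<in>X n. h n x \<in> Y n) \<and>
     (\<forall>f\<in>A. \<forall>x\<in>X (mcod f). h (mdom f) (act f x) = act' f (h (mcod f) x))"

text \<open>Orthogonality to A[p] \<union>_{\<partial>A[p]} A[p] -> A[p] (p >= 2), unfolded via Yoneda:
  two p-cubes agreeing on the boundary (on all cells of \<partial>A[p], i.e. all
  f : [k] -> [p] in A with k < p) are equal.\<close>
definition separated :: "cmor set \<Rightarrow> (nat \<Rightarrow> 'x set) \<Rightarrow> (cmor \<Rightarrow> 'x \<Rightarrow> 'x) \<Rightarrow> bool" where
  "separated A X act \<longleftrightarrow>
     (\<forall>p\<ge>2. \<forall>x\<in>X p. \<forall>y\<in>X p.
        (\<forall>f\<in>A. mcod f = p \<and> mdom f < p \<longrightarrow> act f x = act f y) \<longrightarrow> x = y)"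

text \<open>The precubical set !Sigma: (!Sigma)_n = Sigma^n, face maps delete the i-th letter.\<close>
definition bang :: "'a set \<Rightarrow> nat \<Rightarrow> 'a list set" where
  "bang \<Sigma> n = {w. length w = n \<and> set w \<subseteq> \<Sigma>}"

definition del_letter :: "nat \<Rightarrow> 'a list \<Rightarrow> 'a list" where
  "del_letter i w = take (i - 1) w @ drop i w"

text \<open>Precubical maps !Sigma -> (restriction to the box category of the A-set Y):
  naturality with respect to the generating face maps.\<close>
definition pc_map_bang :: "'a set \<Rightarrow> (nat \<Rightarrow> 'y set) \<Rightarrow> (cmor \<Rightarrow> 'y \<Rightarrow> 'y)
     \<Rightarrow> (nat \<Rightarrow> 'a list \<Rightarrow> 'y) \<Rightarrow> bool" where
  "pc_map_bang \<Sigma> Y act g \<longleftrightarrow>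
     (\<forall>n. \<forall>w\<in>bang \<Sigma> n. g n w \<in> Y n) \<and>
     (\<forall>n i \<alpha> w. 1 \<le> i \<and> i \<le> n \<and> w \<in> bang \<Sigma> n \<longrightarrow>
        act (face n i \<alpha>) (g n w) = g (n - 1) (del_letter i w))"

text \<open>(S, eta) is sh_A L_A(!Sigma) with its unit: the universal arrow from !Sigma to the
  composite right adjoint (separated A-sets -> A-sets -> precubical sets), whose left
  adjoint is sh_A o L_A.  Test objects range over A-sets with carriers in type 'b.\<close>
definition free_sep_on_bang :: "cmor set \<Rightarrow> 'a set \<Rightarrow> (nat \<Rightarrow> 'x set) \<Rightarrow> (cmor \<Rightarrow> 'x \<Rightarrow> 'x)
     \<Rightarrow> (nat \<Rightarrow> 'a list \<Rightarrow> 'x) \<Rightarrow> 'b itself \<Rightarrow> bool" where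
  "free_sep_on_bang A \<Sigma> S actS \<eta> (_::'b itself) \<longleftrightarrow>
     aset A S actS \<and> separated A S actS \<and> pc_map_bang \<Sigma> S actS \<eta> \<and>
     (\<forall>(T::nat \<Rightarrow> 'b set) actT g.
        aset A T actT \<and> separated A T actT \<and> pc_map_bang \<Sigma> T actT g \<longrightarrow>
        (\<exists>h. aset_map A S actS T actT h \<and> (\<forall>n. \<forall>w\<in>bang \<Sigma> n. h n (\<eta> n w) = g n w)) \<and>
        (\<forall>h h'. aset_map A S actS T actT h \<and> (\<forall>n. \<forall>w\<in>bang \<Sigma> n. h n (\<eta> n w) = g n w) \<and>
                aset_map A S actS T actT h' \<and> (\<forall>n. \<forall>w\<in>bang \<Sigma> n. h' n (\<eta> n w) = g n w)
                \<longrightarrow> (\<forall>n. \<forall>x\<in>S n. h n x = h' n x)))"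

definition term_carrier :: "nat \<Rightarrow> unit set" where "term_carrier n = {()}"
definition term_act :: "cmor \<Rightarrow> unit \<Rightarrow> unit" where "term_act f x = ()"

end

theory Submission
  imports Defs
begin

text \<open>Since \<open>(!{\<tau>})\<^sub>n\<close> is the single word \<open>\<tau>\<^sup>n\<close>, a map \<open>g : !{\<tau>} \<rightarrow> T\<close> is a family
  \<open>c\<^sub>n = g\<^sub>n(\<tau>\<^sup>n)\<close> compatible with the face maps, while a map \<open>\<one> \<rightarrow> T\<close> is such a family
  compatible with every morphism of \<open>\<A>\<close>; uniqueness is automatic. So it suffices that, in a
  separated \<open>T\<close>, face-compatibility implies \<open>\<A>\<close>-compatibility. A morphism of \<open>\<A>\<close> out of
  \<open>[0]\<close> or \<open>[1]\<close> is the inclusion of a vertex or (by adjacency preservation) an edge, hence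
  a composite of faces. Out of \<open>[k]\<close>, \<open>k \<ge> 2\<close>, both sides agree on every lower-dimensional
  cell by induction on \<open>k\<close>, so separatedness makes them equal.\<close>

definition subcube :: "bool list \<Rightarrow> bool list \<Rightarrow> nat \<Rightarrow> cmor" where
  "subcube p q k = (k, length p + k + length q, restrict (\<lambda>xs. p @ xs @ q) (cube k))"

lemma subcube_Nil_Nil: "subcube [] [] k = idm k"
  unfolding subcube_def idm_def by (auto simp: fun_eq_iff)

lemma subcube_Cons:
  "subcube (b # p) q k = comp (face (length p + k + length q + 1) 1 b) (subcube p q k)"
  unfolding subcube_def comp_def face_def mdom_def mcod_def mfun_def
  by (auto simp: cube_def fun_eq_iff)

lemma subcube_snoc:
  "subcube [] (q @ [b]) k = comp (face (k + length q + 1) (k + length q + 1) b) (subcube [] q k)"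
  unfolding subcube_def comp_def face_def mdom_def mcod_def mfun_def
  by (auto simp: cube_def fun_eq_iff)

lemma cmor_eqI: "mdom f = n \<Longrightarrow> mcod f = m \<Longrightarrow> mfun f = h \<Longrightarrow> f = (n, m, h)"
  by (auto simp: mdom_def mcod_def mfun_def)

lemma strict_mor_dim0_eq_subcube:
  assumes "strict_mor f" "mdom f = 0"
  shows "f = subcube (mfun f []) [] 0"
proof -
  have fe: "mfun f \<in> cube 0 \<rightarrow>\<^sub>E cube (mcod f)" using assms by (simp add: strict_mor_def)
  then have "length (mfun f []) = mcod f" by (auto simp: cube_def)
  moreover have "mfun f = restrict (\<lambda>xs. mfun f [] @ xs) (cube 0)"
    using fe by (auto simp: fun_eq_iff cube_def)
  ultimately show ?thesis using assms(2) by (auto simp: subcube_def intro: cmor_eqI)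
qed

lemma adjacent_less_split:
  assumes "hamming1 u w" "cless u w"
  obtains p q where "u = p @ [False] @ q" "w = p @ [True] @ q"
proof -
  obtain i where i: "{j. j < length u \<and> u ! j \<noteq> w ! j} = {i}"
    using assms(1) by (auto simp: hamming1_def card_1_singleton_iff)
  have len: "length w = length u" and il: "i < length u" and ne: "u ! i \<noteq> w ! i"
    using assms(1) i by (auto simp: hamming1_def)
  have agree: "\<And>j. j < length u \<Longrightarrow> j \<noteq> i \<Longrightarrow> u ! j = w ! j" using i by blast
  have "u ! i \<le> w ! i"
    using assms(2) il list_all2_nthD[of "(\<le>)" u w i] by (simp add: cless_def cleq_def)
  then have "\<not> u ! i" "w ! i" using ne by auto
  moreover have "take i w = take i u" "drop (Suc i) w = drop (Suc i) u"
    using agree il len by (auto intro: nth_equalityI)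
  moreover have "u = take i u @ u ! i # drop (Suc i) u" "w = take i w @ w ! i # drop (Suc i) w"
    using id_take_nth_drop[of i u] id_take_nth_drop[of i w] il len by simp_all
  ultimately show thesis by (intro that[of "take i u" "drop (Suc i) u"]) simp_all
qed

lemma adj_pres_dim1_eq_subcube:
  assumes "adj_pres f" "mdom f = 1"
  obtains p q where "f = subcube p q 1"
proof -
  have fe: "mfun f \<in> cube 1 \<rightarrow>\<^sub>E cube (mcod f)"
    using assms by (simp add: adj_pres_def strict_mor_def)
  have vertices: "[False] \<in> cube 1" "[True] \<in> cube 1" by (auto simp: cube_def)
  have "cless [False] [True]" by (simp add: cless_def cleq_def)
  moreover have "{i. i < 1 \<and> [False] ! i \<noteq> [True] ! i} = {0}" by auto
  then have "hamming1 [False] [True]" by (simp add: hamming1_def)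
  ultimately have "hamming1 (mfun f [False]) (mfun f [True])"
    and "cless (mfun f [False]) (mfun f [True])"
    using assms vertices by (auto simp: adj_pres_def strict_mor_def)
  then obtain p q where u: "mfun f [False] = p @ [False] @ q"
    and w: "mfun f [True] = p @ [True] @ q"
    by (rule adjacent_less_split)
  have "length (mfun f [False]) = mcod f" using fe vertices by (auto simp: cube_def)
  moreover have "mfun f = restrict (\<lambda>xs. p @ xs @ q) (cube 1)"
  proof
    fix xs
    show "mfun f xs = restrict (\<lambda>xs. p @ xs @ q) (cube 1) xs"
    proof (cases "xs \<in> cube 1")
      case True
      then obtain b where "xs = [b]" by (auto simp: cube_def length_Suc_conv)
      then show ?thesis using u w True by (cases b) auto
    qed (use fe in auto)
  qed
  ultimately have "f = subcube p q 1" using assms(2) u by (auto simp: subcube_def intro: cmor_eqI)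
  then show thesis by (rule that)
qed

locale face_compatible_family =
  fixes A :: "cmor set" and T :: "nat \<Rightarrow> 'x set" and act :: "cmor \<Rightarrow> 'x \<Rightarrow> 'x"
    and c :: "nat \<Rightarrow> 'x"
  assumes cube_category: "cube_category A"
    and aset: "aset A T act"
    and mem: "c n \<in> T n"
    and face_act: "1 \<le> i \<Longrightarrow> i \<le> n \<Longrightarrow> act (face n i \<alpha>) (c n) = c (n - 1)"
begin

abbreviation compatible :: "cmor \<Rightarrow> bool" where
  "compatible f \<equiv> act f (c (mcod f)) = c (mdom f)"

lemma face_in: "1 \<le> i \<Longrightarrow> i \<le> n \<Longrightarrow> face n i \<alpha> \<in> A"
  using cube_category by (simp add: cube_category_def)

lemma comp_in: "f \<in> A \<Longrightarrow> g \<in> A \<Longrightarrow> mcod f = mdom g \<Longrightarrow> comp g f \<in> A"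
  using cube_category by (simp add: cube_category_def)

lemma compatible_comp:
  assumes "f \<in> A" "g \<in> A" "mcod f = mdom g" "compatible f" "compatible g"
  shows "compatible (comp g f)"
proof -
  have "act (comp g f) (c (mcod g)) = act f (act g (c (mcod g)))"
    using aset assms(1-3) mem by (simp add: aset_def)
  then show ?thesis using assms(3-5) by (simp add: comp_def mdom_def mcod_def)
qed

lemma face_compatible:
  assumes "1 \<le> i" "i \<le> n"
  shows "compatible (face n i \<alpha>)"
  using face_act[OF assms] by (simp add: face_def mdom_def mcod_def)

lemma subcube_in_compatible: "subcube p q k \<in> A \<and> compatible (subcube p q k)"
proof (induction p)
  case Nil
  show ?case
  proof (induction q rule: rev_induct)
    case Nil
    show ?case
      using cube_category aset mem by (simp add: subcube_Nil_Nil cube_category_def aset_def idm_def mdom_def mcod_def)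
  next
    case (snoc b q)
    let ?F = "face (k + length q + 1) (k + length q + 1) b"
    have F: "?F \<in> A" "compatible ?F" by (simp_all add: face_in face_compatible)
    have E: "subcube [] q k \<in> A" "compatible (subcube [] q k)" using snoc.IH by simp_all
    have "mcod (subcube [] q k) = mdom ?F" by (simp add: subcube_def face_def mcod_def mdom_def)
    then show ?case
      unfolding subcube_snoc using comp_in compatible_comp E F by blast
  qed
next
  case (Cons b p)
  let ?F = "face (length p + k + length q + 1) 1 b"
  have F: "?F \<in> A" "compatible ?F" by (simp_all add: face_in face_compatible)
  have E: "subcube p q k \<in> A" "compatible (subcube p q k)" using Cons.IH by simp_all
  have "mcod (subcube p q k) = mdom ?F" by (simp add: subcube_def face_def mcod_def mdom_def)
  then show ?case
    unfolding subcube_Cons using comp_in compatible_comp E F by blast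
qed

lemma compatible_low_dim:
  assumes "f \<in> A" "mdom f < 2"
  shows "compatible f"
proof -
  have "adj_pres f" "strict_mor f" using cube_category assms(1) by (simp_all add: cube_category_def)
  moreover from assms(2) consider "mdom f = 0" | "mdom f = 1" by linarith
  ultimately obtain p q k where "f = subcube p q k"
    using adj_pres_dim1_eq_subcube strict_mor_dim0_eq_subcube by metis
  then show ?thesis using subcube_in_compatible by simp
qed

lemma compatible_if_separated:
  assumes sep: "separated A T act"
  shows "f \<in> A \<Longrightarrow> compatible f"
proof (induction "mdom f" arbitrary: f rule: less_induct)
  case less
  show ?case
  proof (cases "mdom f < 2")
    case True
    then show ?thesis using compatible_low_dim less.prems by blast
  next
    case False
    have "act e (act f (c (mcod f))) = act e (c (mdom f))"
      if e: "e \<in> A" "mcod e = mdom f" "mdom e < mdom f" for e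
    proof -
      have ce: "comp f e \<in> A" and dom: "mdom (comp f e) = mdom e"
        and cod: "mcod (comp f e) = mcod f"
        using comp_in e less.prems by (simp_all add: comp_def mdom_def mcod_def)
      have "act e (act f (c (mcod f))) = act (comp f e) (c (mcod f))"
        using aset e less.prems mem by (simp add: aset_def)
      also have "\<dots> = c (mdom e)" using less.hyps[of "comp f e"] ce dom cod e(3) by simp
      also have "\<dots> = act e (c (mdom f))" using less.hyps[OF e(3) e(1)] e(2) by simp
      finally show ?thesis .
    qed
    moreover have "act f (c (mcod f)) \<in> T (mdom f)" using aset less.prems mem by (simp add: aset_def)
    ultimately show ?thesis
      using sep mem False unfolding separated_def by (metis not_less)
  qed
qed

end

lemma bang_singleton: "w \<in> bang {\<tau>} n \<longleftrightarrow> w = replicate n \<tau>"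
  by (auto simp: bang_def intro: replicate_eqI)

lemma pc_map_bang_singleton_face_compatible:
  assumes "cube_category A" "aset A T act" "pc_map_bang {\<tau>} T act g"
  shows "face_compatible_family A T act (\<lambda>n. g n (replicate n \<tau>))"
proof
  show "g n (replicate n \<tau>) \<in> T n" for n
    using assms(3) by (simp add: pc_map_bang_def bang_singleton)
  show "act (face n i \<alpha>) (g n (replicate n \<tau>)) = g (n - 1) (replicate (n - 1) \<tau>)"
    if "1 \<le> i" "i \<le> n" for n i \<alpha>
  proof -
    have "del_letter i (replicate n \<tau>) = replicate (n - 1) \<tau>"
      using that by (simp add: del_letter_def replicate_add[symmetric])
    then show ?thesis using assms(3) that by (simp add: pc_map_bang_def bang_singleton)
  qed
qed (use assms in auto)

lemma aset_map_terminal_iff: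
  "aset_map A term_carrier term_act T act h \<longleftrightarrow>
     (\<forall>n. h n () \<in> T n) \<and> (\<forall>f\<in>A. act f (h (mcod f) ()) = h (mdom f) ())"
  by (auto simp: aset_map_def term_carrier_def term_act_def)

theorem proposition4p25:
  fixes A :: "cmor set" and \<tau> :: 'a
  assumes "cube_category A"
  shows "free_sep_on_bang A {\<tau>} term_carrier term_act (\<lambda>n w. ()) TYPE('b)"
proof -
  have terminal: "aset A term_carrier term_act" "separated A term_carrier term_act"
    "pc_map_bang {\<tau>} term_carrier term_act (\<lambda>n w. ())"
    by (simp_all add: aset_def separated_def pc_map_bang_def term_carrier_def term_act_def)
  have "\<exists>h. aset_map A term_carrier term_act T act h \<and> (\<forall>n. \<forall>w\<in>bang {\<tau>} n. h n () = g n w)"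
    if "aset A T act" "separated A T act" "pc_map_bang {\<tau>} T act g"
    for T :: "nat \<Rightarrow> 'b set" and act g
  proof (intro exI conjI)
    interpret face_compatible_family A T act "\<lambda>n. g n (replicate n \<tau>)"
      using pc_map_bang_singleton_face_compatible[OF assms that(1,3)] .
    show "aset_map A term_carrier term_act T act (\<lambda>n _. g n (replicate n \<tau>))"
      using compatible_if_separated[OF that(2)] mem by (simp add: aset_map_terminal_iff)
  qed (simp add: bang_singleton)
  then show ?thesis
    using terminal unfolding free_sep_on_bang_def
    by (auto simp: bang_singleton term_carrier_def)
qed

end
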